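(* Let $\alpha\in\mathbb{R}$ with $\alpha\neq 1$. Then for every $\beta\in\mathbb{R}$, the sequence $\{k^2+\alpha k+\beta\}_{k=0}^{\infty}$ is not a Legendre multiplier sequence.
   Context: The Legendre polynomials $\mathfrak{Le}_n(x)$ are defined by $\frac{1}{\sqrt{1-2xt+t^2}}=\sum_{k=0}^{\infty}\mathfrak{Le}_k(x)t^k$. A real sequence $\{\gamma_k\}_{k=0}^{\infty}$ is a Legendre multiplier sequence if, for every $n$ and all real $a_0,\dots,a_n$, the polynomial $\sum_{k=0}^n a_k\gamma_k\mathfrak{Le}_k(x)$ has only real zeros whenever $\sum_{k=0}^n a_k\mathfrak{Le}_k(x)$ has only real zeros. *)

theory Defs
  imports "HOL-Analysis.Analysis" "HOL-Computational_Algebra.Computational_Algebra"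
begin

text \<open>Legendre polynomials via the formal expansion of the generating function
  (1 - 2xt + t^2)^(-1/2) = (1+u)^(-1/2) with u = -2xt + t^2, i.e.
  sum over j of ((-1/2) gchoose j) u^j; the coefficient of t^k is the k-th polynomial
  (only j \<le> k contribute, since u has no constant term in t).\<close>
definition legendre_gen_u :: "real poly fps" where
  "legendre_gen_u = fps_const (smult (-2) [:0, 1:]) * fps_X + fps_X ^ 2"

definition Le :: "nat \<Rightarrow> real poly" where
  "Le k = (\<Sum>j\<le>k. smult ((-1/2 :: real) gchoose j) (fps_nth (legendre_gen_u ^ j) k))"

definition only_real_zeros :: "real poly \<Rightarrow> bool" where
  "only_real_zeros p \<longleftrightarrow>
     p = 0 \<or> (\<forall>z::complex. poly (map_poly complex_of_real p) z = 0 \<longrightarrow> z \<in> \<real>)"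

definition legendre_multiplier_sequence :: "(nat \<Rightarrow> real) \<Rightarrow> bool" where
  "legendre_multiplier_sequence \<gamma> \<longleftrightarrow>
     (\<forall>(n::nat) (a::nat \<Rightarrow> real).
        only_real_zeros (\<Sum>k\<le>n. smult (a k) (Le k)) \<longrightarrow>
        only_real_zeros (\<Sum>k\<le>n. smult (a k * \<gamma> k) (Le k)))"

end

theory Submission imports Defs begin

text \<open>Expand the degree-4 polynomial \<open>(x - 1)\<^sup>4\<close>, which has only the real zero 1, in the
  Legendre basis and apply the multiplier \<open>k\<^sup>2 + \<alpha> k + \<beta>\<close>. Writing
  \<open>k\<^sup>2 + \<alpha> k + \<beta> = k (k + 1) + (\<alpha> - 1) k + \<beta>\<close>, the parts \<open>\<beta>\<close> and \<open>k (k + 1)\<close> (a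
  differential operator in Legendre's equation) keep a zero of order at least 3 at \<open>x = 1\<close>,
  so the value and first two derivatives of the image at 1 are \<open>\<alpha> - 1\<close> times fixed
  numbers. These violate Laguerre's inequality \<open>p p'' \<le> p'\<^sup>2\<close>, which every real polynomial
  with only real zeros satisfies, unless \<open>\<alpha> = 1\<close>.\<close>

lemma fps_const_plus_X_power_nth:
  fixes c :: "'a :: comm_ring_1"
  shows "(fps_const c + fps_X) ^ j $ m = of_nat (j choose m) * c ^ (j - m)"
proof -
  have "(fps_const c + fps_X) ^ j = (\<Sum>k\<le>j. fps_const (of_nat (j choose k) * c ^ (j - k)) * fps_X ^ k)"
    by (subst add.commute, subst binomial_ring) (simp add: fps_const_mult fps_const_power fps_of_nat[symmetric] mult_ac)
  then show ?thesis
    by (auto simp: fps_sum_nth binomial_eq_0 if_distrib cong: if_cong)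
qed

lemma legendre_gen_u_power_nth:
  "legendre_gen_u ^ j $ k =
     (if j \<le> k then of_nat (j choose (k - j)) * [:0, -2:] ^ (j - (k - j)) else 0)"
proof -
  have "legendre_gen_u = fps_X * (fps_const [:0, -2:] + fps_X)"
    unfolding legendre_gen_u_def by (simp add: power2_eq_square algebra_simps)
  then have "legendre_gen_u ^ j = fps_X ^ j * (fps_const [:0, -2:] + fps_X) ^ j"
    by (metis power_mult_distrib)
  then show ?thesis
    by (simp add: fps_X_power_mult_nth fps_const_plus_X_power_nth)
qed

lemma gbinomial_minus_half:
  "(- (1 / 2) :: real) gchoose Suc 0 = - 1 / 2"
  "(- (1 / 2) :: real) gchoose Suc (Suc 0) = 3 / 8"
  "(- (1 / 2) :: real) gchoose Suc (Suc (Suc 0)) = - 5 / 16"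
  "(- (1 / 2) :: real) gchoose Suc (Suc (Suc (Suc 0))) = 35 / 128"
  by (simp_all add: gbinomial_Suc)

lemma Le_0: "Le 0 = 1"
  and Le_1: "Le 1 = [:0, 1:]" "Le (Suc 0) = [:0, 1:]"
  and Le_2: "Le 2 = [:-1/2, 0, 3/2:]"
  and Le_3: "Le 3 = [:0, -3/2, 0, 5/2:]"
  and Le_4: "Le 4 = [:3/8, 0, -15/4, 0, 35/8:]"
  by (simp_all add: Le_def legendre_gen_u_power_nth gbinomial_minus_half
      numeral_eq_Suc numeral_poly one_pCons)

lemma map_poly_of_real_mult:
  "map_poly of_real (p * q) = map_poly of_real p * (map_poly of_real q :: 'a :: {real_algebra_1, comm_ring_1} poly)"
  by (simp add: poly_eq_iff coeff_map_poly coeff_mult)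

lemma map_poly_of_real_power:
  "map_poly of_real (p ^ n) = (map_poly of_real p :: 'a :: {real_algebra_1, comm_ring_1} poly) ^ n"
  by (induction n) (simp_all add: map_poly_of_real_mult)

lemma poly_map_poly_of_real:
  "poly (map_poly of_real p) (of_real x :: 'a :: {real_algebra_1, comm_ring_1}) = of_real (poly p x)"
  by (induction p) (auto simp: map_poly_pCons)

lemma only_real_zeros_linear_power: "only_real_zeros ([:-r, 1:] ^ n)"
  unfolding only_real_zeros_def
  by (auto simp: map_poly_of_real_power map_poly_pCons)

lemma only_real_zeros_real_root:
  assumes "only_real_zeros p" and "degree p > 0"
  obtains r where "poly p r = 0"
proof -
  have "\<not> constant (poly (map_poly complex_of_real p))"
    using assms(2) by (simp add: constant_degree degree_map_poly)
  then obtain z where z: "poly (map_poly complex_of_real p) z = 0"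
    using fundamental_theorem_of_algebra by blast
  moreover have "p \<noteq> 0"
    using assms(2) by auto
  ultimately obtain r where "z = of_real r"
    using assms(1) unfolding only_real_zeros_def by (metis Reals_cases)
  with z have "poly p r = 0"
    by (simp add: poly_map_poly_of_real)
  then show thesis
    by (rule that)
qed

lemma only_real_zeros_right_factor:
  assumes "p \<noteq> 0" and "only_real_zeros (p * q)"
  shows "only_real_zeros q"
  using assms unfolding only_real_zeros_def by (auto simp: map_poly_of_real_mult)

definition laguerre_form :: "real poly \<Rightarrow> real \<Rightarrow> real" where
  "laguerre_form p x = (poly (pderiv p) x)\<^sup>2 - poly p x * poly (pderiv (pderiv p)) x"

lemma laguerre_form_linear_factor:
  "laguerre_form ([:-r, 1:] * p) x = (poly p x)\<^sup>2 + (x - r)\<^sup>2 * laguerre_form p x"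
proof -
  have d1: "pderiv ([:-r, 1:] * p) = p + [:-r, 1:] * pderiv p"
    unfolding pderiv_mult by (simp add: pderiv_pCons)
  have d2: "pderiv (pderiv ([:-r, 1:] * p)) = smult 2 (pderiv p) + [:-r, 1:] * pderiv (pderiv p)"
    unfolding d1 pderiv_add pderiv_mult
    by (simp add: pderiv_pCons algebra_simps smult_add_left[symmetric] numeral_poly del: smult_add_left)
  show ?thesis
    unfolding laguerre_form_def d2 unfolding d1 by (simp add: algebra_simps power2_eq_square)
qed

lemma laguerre_form_nonneg:
  assumes "only_real_zeros p"
  shows "laguerre_form p x \<ge> 0"
  using assms
proof (induction "degree p" arbitrary: p rule: less_induct)
  case less
  show ?case
  proof (cases "degree p = 0")
    case True
    then show ?thesis
      by (auto simp: laguerre_form_def elim: degree_eq_zeroE)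
  next
    case False
    then obtain r where "poly p r = 0"
      using less.prems only_real_zeros_real_root by blast
    then obtain q where p: "p = [:-r, 1:] * q"
      by (metis dvdE poly_eq_0_iff_dvd)
    with False have "q \<noteq> 0"
      by auto
    then have "degree q < degree p"
      using degree_mult_eq[of "[:-r, 1:]" q] p by simp
    moreover have "only_real_zeros q"
      using only_real_zeros_right_factor[of "[:-r, 1:]" q] less.prems p by simp
    ultimately have "laguerre_form q x \<ge> 0"
      using less.hyps by blast
    then show ?thesis
      unfolding p laguerre_form_linear_factor by simp
  qed
qed

lemma sum_atMost_4:
  "(\<Sum>k::nat\<le>4. f k) = f 0 + f 1 + f 2 + f 3 + (f 4 :: 'a :: comm_monoid_add)"
  by (simp add: numeral_eq_Suc atMost_Suc add_ac)

definition fourth_power_coeffs :: "nat \<Rightarrow> real" where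
  "fourth_power_coeffs k = [16/5, -32/5, 32/7, -8/5, 8/35] ! k"

lemma legendre_expansion_fourth_power:
  "(\<Sum>k\<le>4. smult (fourth_power_coeffs k) (Le k)) = [:-1, 1:] ^ 4"
proof -
  have "[:-1, 1:] ^ 4 = [:1, -4, 6, -4, 1 :: real:]"
    by (simp add: numeral_eq_Suc)
  then show ?thesis
    by (simp add: sum_atMost_4 fourth_power_coeffs_def Le_0 Le_1 Le_2 Le_3 Le_4)
qed

lemma laguerre_form_quadratic_multiplier:
  fixes \<alpha> \<beta> :: real
  defines "q \<equiv> \<Sum>k\<le>4. smult (fourth_power_coeffs k * (real k ^ 2 + \<alpha> * real k + \<beta>)) (Le k)"
  shows "laguerre_form q 1 = - 2496 / 1225 * (\<alpha> - 1)\<^sup>2"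
proof -
  have at_one: "poly q 1 = - 8/7 * (\<alpha> - 1)"
    "poly (pderiv q) 1 = 48/35 * (\<alpha> - 1)"
    "poly (pderiv (pderiv q)) 1 = - 24/7 * (\<alpha> - 1)"
    unfolding q_def sum_atMost_4 fourth_power_coeffs_def
    by (simp_all add: Le_0 Le_1 Le_2 Le_3 Le_4 pderiv_add pderiv_smult pderiv_pCons algebra_simps)
      (simp_all add: field_simps)
  show ?thesis
    unfolding laguerre_form_def at_one by (simp add: power2_eq_square field_simps)
qed

theorem proposition4p5:
  fixes \<alpha> :: real
  assumes "\<alpha> \<noteq> 1"
  shows "\<forall>\<beta>::real. \<not> legendre_multiplier_sequence (\<lambda>k. real k ^ 2 + \<alpha> * real k + \<beta>)"
proof (intro allI notI)
  fix \<beta> :: real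
  assume "legendre_multiplier_sequence (\<lambda>k. real k ^ 2 + \<alpha> * real k + \<beta>)"
  moreover have "only_real_zeros (\<Sum>k\<le>4. smult (fourth_power_coeffs k) (Le k))"
    unfolding legendre_expansion_fourth_power by (rule only_real_zeros_linear_power)
  ultimately have "only_real_zeros
      (\<Sum>k\<le>4. smult (fourth_power_coeffs k * (real k ^ 2 + \<alpha> * real k + \<beta>)) (Le k))"
    unfolding legendre_multiplier_sequence_def by blast
  then have "laguerre_form
      (\<Sum>k\<le>4. smult (fourth_power_coeffs k * (real k ^ 2 + \<alpha> * real k + \<beta>)) (Le k)) 1 \<ge> 0"
    by (rule laguerre_form_nonneg)
  with assms show False
    unfolding laguerre_form_quadratic_multiplier by simp
qed

end
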